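(* Let $c:\mathbb{R}_+\to\mathbb{R}_+$ be twice continuously differentiable, strictly semi-convex and strictly increasing, but not of BPR-type. Then there is a nonatomic routing game with a single origin-destination pair, consisting of two parallel edges from the origin to the destination with cost functions $c(x)$ and $c(x)+t$ for some $t\in\mathbb{R}_+$, that does not have a demand-independent optimal toll (DIOT).
   Context: A function $c$ is of BPR-type if $c(x)=t_c+a_cx^{\beta}$ for all $x\ge0$, for some $t_c,a_c\in\mathbb{R}_+$ and $\beta>0$. Strictly semi-convex means that $x\mapsto x\,c(x)$ is strictly convex. In a nonatomic routing game with a single origin $o$, destination $d$ and demand $\mu\ge0$, a flow splits $\mu$ among the $o$–$d$ paths (here the two edges); an edge with load $x$ has cost $c_e(x)$. A Wardrop equilibrium is a flow where every used path has cost at most that of every other path; a system optimum minimizes the total cost $\sum_e x_ec_e(x_e)$. For a toll vector $\boldsymbol{\tau}\in\mathbb{R}^{\mathcal{E}}$ (entries may be negative), the tolled game has edge costs $c_e(x)+\tau_e$. $\boldsymbol{\tau}$ is a DIOT if for every demand $\mu\ge0$ every Wardrop equilibrium of the tolled game is a system optimum of the untolled game for that demand. *)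

theory Defs
  imports "HOL-Analysis.Analysis"
begin

definition strict_convex_on_real :: "real set \<Rightarrow> (real \<Rightarrow> real) \<Rightarrow> bool" where
  "strict_convex_on_real S f \<longleftrightarrow>
     (\<forall>x\<in>S. \<forall>y\<in>S. \<forall>u::real. x \<noteq> y \<and> 0 < u \<and> u < 1 \<longrightarrow>
        f (u * x + (1 - u) * y) < u * f x + (1 - u) * f y)"

definition strictly_semi_convex :: "(real \<Rightarrow> real) \<Rightarrow> bool" where
  "strictly_semi_convex c \<longleftrightarrow> strict_convex_on_real {0..} (\<lambda>x. x * c x)"

definition BPR_type :: "(real \<Rightarrow> real) \<Rightarrow> bool" where
  "BPR_type c \<longleftrightarrow> (\<exists>t a \<beta>::real. t \<ge> 0 \<and> a \<ge> 0 \<and> \<beta> > 0 \<and>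
      (\<forall>x\<ge>0. c x = t + a * x powr \<beta>))"

definition twice_cont_diff_nonneg :: "(real \<Rightarrow> real) \<Rightarrow> bool" where
  "twice_cont_diff_nonneg c \<longleftrightarrow> (\<exists>c' c''.
      (\<forall>x\<ge>0. (c has_real_derivative c' x) (at x within {0..})) \<and>
      (\<forall>x\<ge>0. (c' has_real_derivative c'' x) (at x within {0..})) \<and>
      continuous_on {0..} c'')"

text \<open>Two parallel o-d edges (edge 1 and edge 2); a flow is a pair of edge loads.\<close>
definition feasible2 :: "real \<Rightarrow> real \<Rightarrow> real \<Rightarrow> bool" where
  "feasible2 \<mu> x1 x2 \<longleftrightarrow> x1 \<ge> 0 \<and> x2 \<ge> 0 \<and> x1 + x2 = \<mu>"

definition wardrop2 :: "(real \<Rightarrow> real) \<Rightarrow> (real \<Rightarrow> real) \<Rightarrow> real \<Rightarrow> real \<Rightarrow> real \<Rightarrow> bool" where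
  "wardrop2 c1 c2 \<mu> x1 x2 \<longleftrightarrow> feasible2 \<mu> x1 x2 \<and>
     (x1 > 0 \<longrightarrow> c1 x1 \<le> c2 x2) \<and> (x2 > 0 \<longrightarrow> c2 x2 \<le> c1 x1)"

definition total_cost2 :: "(real \<Rightarrow> real) \<Rightarrow> (real \<Rightarrow> real) \<Rightarrow> real \<Rightarrow> real \<Rightarrow> real" where
  "total_cost2 c1 c2 x1 x2 = x1 * c1 x1 + x2 * c2 x2"

definition sysopt2 :: "(real \<Rightarrow> real) \<Rightarrow> (real \<Rightarrow> real) \<Rightarrow> real \<Rightarrow> real \<Rightarrow> real \<Rightarrow> bool" where
  "sysopt2 c1 c2 \<mu> x1 x2 \<longleftrightarrow> feasible2 \<mu> x1 x2 \<and>
     (\<forall>y1 y2. feasible2 \<mu> y1 y2 \<longrightarrow> total_cost2 c1 c2 x1 x2 \<le> total_cost2 c1 c2 y1 y2)"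

definition is_DIOT2 :: "(real \<Rightarrow> real) \<Rightarrow> (real \<Rightarrow> real) \<Rightarrow> real \<Rightarrow> real \<Rightarrow> bool" where
  "is_DIOT2 c1 c2 \<tau>1 \<tau>2 \<longleftrightarrow> (\<forall>\<mu>\<ge>0. \<forall>x1 x2.
      wardrop2 (\<lambda>x. c1 x + \<tau>1) (\<lambda>x. c2 x + \<tau>2) \<mu> x1 x2 \<longrightarrow> sysopt2 c1 c2 \<mu> x1 x2)"

end

(*
  Suppose every shift t \<ge> 0 admitted a DIOT (\<tau>1, \<tau>2), and write c*(x) = c x + x c'(x) for the
  marginal cost. Taking t = c*(y) - c 0 for a load y > 0, the optimality conditions of the
  equilibria at demands near y force the toll gap t + \<tau>2 - \<tau>1 to equal c y - c 0, and the
  interior optimality condition then shows that c* - c 0 is additive as a function of the cost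
  level c - c 0. Being also monotone, it is linear: x c'(x) = \<beta> (c x - c 0). This Euler equation
  integrates to c x = c 0 + a x powr \<beta>, and strict monotonicity forces \<beta> > 0, so c is of BPR type.
*)

theory Submission
  imports Defs
begin

lemma strict_convex_on_real_imp_convex_on:
  fixes f :: "real \<Rightarrow> real"
  assumes strict: "strict_convex_on_real S f" and "convex S"
  shows "convex_on S f"
proof (rule convex_onI)
  fix t :: real and x y assume t: "0 < t" "t < 1" and xy: "x \<in> S" "y \<in> S"
  show "f ((1 - t) *\<^sub>R x + t *\<^sub>R y) \<le> (1 - t) * f x + t * f y"
  proof (cases "x = y")
    case True
    then show ?thesis by (simp add: algebra_simps)
  next
    case False
    then have "f ((1 - t) * x + (1 - (1 - t)) * y) < (1 - t) * f x + (1 - (1 - t)) * f y"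
      using strict[unfolded strict_convex_on_real_def, rule_format, of x y "1 - t"] t xy by simp
    then show ?thesis by simp
  qed
qed fact

lemma strict_convex_on_real_deriv_less:
  fixes f :: "real \<Rightarrow> real"
  assumes strict: "strict_convex_on_real S f" and "convex S"
    and S: "x \<in> interior S" "y \<in> interior S" and "x < y"
    and f'x: "(f has_real_derivative f'x) (at x)"
    and f'y: "(f has_real_derivative f'y) (at y)"
  shows "f'x < f'y"
proof -
  have cvx: "convex_on S f" by (rule strict_convex_on_real_imp_convex_on) fact+
  have conn: "connected S" using \<open>convex S\<close> by (rule convex_connected)
  have xy: "x \<in> S" "y \<in> S" using S interior_subset by auto
  define z where "z = (1/2) * x + (1 - 1/2) * y"
  have "z \<in> S" unfolding z_def using convexD_alt[OF \<open>convex S\<close> xy(2,1), of "1/2"] by (simp add: add.commute)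
  have "f z < f x / 2 + f y / 2"
    using strict[unfolded strict_convex_on_real_def, rule_format, of x y "1/2"] xy \<open>x < y\<close>
    unfolding z_def by simp
  moreover have "f z - f x \<ge> f'x * (z - x)"
    by (rule convex_on_imp_above_tangent[OF cvx conn S(1) \<open>z \<in> S\<close>])
      (use f'x has_field_derivative_at_within in blast)
  moreover have "f x - f y \<ge> f'y * (x - y)"
    by (rule convex_on_imp_above_tangent[OF cvx conn S(2) xy(1)])
      (use f'y has_field_derivative_at_within in blast)
  ultimately have "f'x * (y - x) < f'y * (y - x)"
    unfolding z_def by (simp add: algebra_simps)
  then show ?thesis using \<open>x < y\<close> by simp
qed

lemma sysopt2_interior_marginal_costs_eq:
  assumes opt: "sysopt2 c1 c2 \<mu> x1 x2" and "0 < x1" "0 < x2"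
    and m1: "((\<lambda>x. x * c1 x) has_real_derivative m1) (at x1)"
    and m2: "((\<lambda>x. x * c2 x) has_real_derivative m2) (at x2)"
  shows "m1 = m2"
proof -
  define \<phi> where "\<phi> s = total_cost2 c1 c2 (x1 + s) (x2 - s)" for s
  have "((\<lambda>s. (x1 + s) * c1 (x1 + s)) has_real_derivative m1 * 1) (at 0)"
    by (rule DERIV_chain2[where f = "\<lambda>x. x * c1 x"]) (use m1 in simp, auto intro!: derivative_eq_intros)
  moreover have "((\<lambda>s. (x2 - s) * c2 (x2 - s)) has_real_derivative m2 * (-1)) (at 0)"
    by (rule DERIV_chain2[where f = "\<lambda>x. x * c2 x"]) (use m2 in simp, auto intro!: derivative_eq_intros)
  ultimately have \<phi>': "(\<phi> has_real_derivative m1 * 1 + m2 * (-1)) (at 0)"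
    unfolding \<phi>_def total_cost2_def by (rule DERIV_add)
  have min: "\<forall>s. \<bar>0 - s\<bar> < min x1 x2 \<longrightarrow> \<phi> 0 \<le> \<phi> s"
  proof (intro allI impI)
    fix s assume "\<bar>0 - s\<bar> < min x1 x2"
    then have "feasible2 \<mu> (x1 + s) (x2 - s)"
      using opt unfolding sysopt2_def feasible2_def by auto
    then show "\<phi> 0 \<le> \<phi> s" using opt unfolding sysopt2_def \<phi>_def by simp
  qed
  have "m1 * 1 + m2 * (-1) = 0"
    by (rule DERIV_local_min[OF \<phi>' _ min]) (use \<open>0 < x1\<close> \<open>0 < x2\<close> in simp)
  then show ?thesis by simp
qed

lemma sysopt2_boundary_marginal_cost_le:
  assumes opt: "sysopt2 c1 c2 \<mu> \<mu> 0" and "0 < \<mu>"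
    and m1: "((\<lambda>x. x * c1 x) has_real_derivative m1) (at \<mu>)"
    and m2: "((\<lambda>x. x * c2 x) has_real_derivative m2) (at 0 within {0..})"
  shows "m1 \<le> m2"
proof (rule ccontr)
  assume "\<not> m1 \<le> m2"
  define \<phi> where "\<phi> s = total_cost2 c1 c2 (\<mu> - s) s" for s
  have m1': "((\<lambda>s. (\<mu> - s) * c1 (\<mu> - s)) has_real_derivative m1 * (-1)) (at 0)"
    by (rule DERIV_chain2[where f = "\<lambda>x. x * c1 x"]) (use m1 in simp, auto intro!: derivative_eq_intros)
  have \<phi>': "(\<phi> has_real_derivative m1 * (-1) + m2) (at 0 within {0..})"
    unfolding \<phi>_def total_cost2_def by (rule DERIV_add[OF has_field_derivative_at_within[OF m1'] m2])
  have "m1 * (-1) + m2 < 0" using \<open>\<not> m1 \<le> m2\<close> by simp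
  then obtain d where "d > 0" and "\<forall>h>0. 0 + h \<in> {0..} \<longrightarrow> h < d \<longrightarrow> \<phi> (0 + h) < \<phi> 0"
    using has_real_derivative_neg_dec_right[OF \<phi>'] by blast
  then have d: "\<And>h. 0 < h \<Longrightarrow> h < d \<Longrightarrow> \<phi> h < \<phi> 0" by simp
  define h where "h = min d \<mu> / 2"
  have "0 < h" "h < d" "h < \<mu>" using \<open>d > 0\<close> \<open>0 < \<mu>\<close> unfolding h_def by auto
  then have "feasible2 \<mu> (\<mu> - h) h" unfolding feasible2_def by simp
  then have "\<phi> 0 \<le> \<phi> h" using opt unfolding sysopt2_def \<phi>_def by simp
  with d[OF \<open>0 < h\<close> \<open>h < d\<close>] show False by simp
qed

lemma additive_on_nat_mult:
  fixes F :: "real \<Rightarrow> real"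
  assumes add: "\<And>u v. 0 < u \<Longrightarrow> 0 < v \<Longrightarrow> u + v < L \<Longrightarrow> F (u + v) = F u + F v"
    and "F 0 = 0" and "0 < w"
  shows "real n * w < L \<Longrightarrow> F (real n * w) = real n * F w"
proof (induction n)
  case 0
  then show ?case using \<open>F 0 = 0\<close> by simp
next
  case (Suc n)
  show ?case
  proof (cases "n = 0")
    case False
    have "real n * w + w < L" using Suc.prems by (simp add: algebra_simps)
    then have "F (real n * w + w) = F (real n * w) + F w"
      using False \<open>0 < w\<close> by (intro add) auto
    moreover have "F (real n * w) = real n * F w"
      using Suc.IH \<open>real n * w + w < L\<close> \<open>0 < w\<close> by simp
    ultimately show ?thesis by (simp add: algebra_simps)
  qed simp
qed

lemma additive_mono_bracket:
  fixes F :: "real \<Rightarrow> real"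
  assumes add: "\<And>u v. 0 < u \<Longrightarrow> 0 < v \<Longrightarrow> u + v < L \<Longrightarrow> F (u + v) = F u + F v"
    and mono: "\<And>u v. 0 \<le> u \<Longrightarrow> u \<le> v \<Longrightarrow> v < L \<Longrightarrow> F u \<le> F v"
    and F0: "F 0 = 0" and w: "0 < w" and u: "0 \<le> u" "u + w < L"
  shows "\<bar>F u - u / w * F w\<bar> \<le> F w"
proof -
  define p where "p = nat \<lfloor>u / w\<rfloor>"
  have "0 \<le> u / w" using u w by simp
  then have p: "real p \<le> u / w" "u / w < real p + 1"
    unfolding p_def by (simp_all add: of_nat_nat)
  have lo: "real p * w \<le> u" and hi: "u < (real p + 1) * w"
    using p w by (simp_all add: le_divide_eq divide_less_eq)
  have "F w \<ge> 0" using mono[of 0 w] F0 w u by simp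
  have "real p * w < L" using lo u w by linarith
  then have "real p * F w = F (real p * w)"
    using additive_on_nat_mult[where L = L, OF add F0 w, where n = p] by simp
  also have "\<dots> \<le> F u" using mono[of "real p * w" u] lo u w by simp
  finally have "real p * F w \<le> F u" .
  moreover have "F u \<le> F (real (Suc p) * w)"
    using mono[of u "real (Suc p) * w"] hi lo u by (simp add: algebra_simps)
  then have "F u \<le> (real p + 1) * F w"
    using additive_on_nat_mult[where L = L, OF add F0 w, where n = "Suc p"] lo u by (simp add: algebra_simps)
  moreover have "real p * F w \<le> u / w * F w"
    using p(1) \<open>F w \<ge> 0\<close> by (rule mult_right_mono)
  moreover have "u / w * F w \<le> (real p + 1) * F w"
    using p(2) \<open>F w \<ge> 0\<close> by (intro mult_right_mono) simp_all
  ultimately show ?thesis by (simp add: abs_le_iff algebra_simps)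
qed

lemma additive_mono_imp_linear:
  fixes F :: "real \<Rightarrow> real"
  assumes add: "\<And>u v. 0 < u \<Longrightarrow> 0 < v \<Longrightarrow> u + v < L \<Longrightarrow> F (u + v) = F u + F v"
    and mono: "\<And>u v. 0 \<le> u \<Longrightarrow> u \<le> v \<Longrightarrow> v < L \<Longrightarrow> F u \<le> F v"
    and F0: "F 0 = 0" and a: "0 < a" "a < L" and u: "0 \<le> u" "u < L"
  shows "F u = u * (F a / a)"
proof -
  obtain N :: nat where N: "a / (L - u) < real N" using reals_Archimedean2 by blast
  have "\<bar>F u - u * (F a / a)\<bar> \<le> F a / real n" if "n \<ge> N" for n
  proof -
    have "a < real N * (L - u)" using N a u by (simp add: divide_less_eq)
    also have "\<dots> \<le> real n * (L - u)" using that u by (simp add: mult_right_mono)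
    finally have "a < real n * (L - u)" .
    then have "0 < real n" using a by (cases n) auto
    define w where "w = a / real n"
    have "a / real n < L - u"
      using \<open>0 < real n\<close> \<open>a < real n * (L - u)\<close> by (simp add: pos_divide_less_eq mult.commute)
    then have w: "0 < w" "u + w < L" using a \<open>0 < real n\<close> unfolding w_def by simp_all
    have "F a = real n * F w"
      using additive_on_nat_mult[where L = L, OF add F0 w(1), where n = n] a \<open>0 < real n\<close> unfolding w_def by simp
    then have Fw: "F w = F a / real n" and scaled: "u / w * F w = u * (F a / a)"
      using \<open>0 < real n\<close> a unfolding w_def by (simp_all add: field_simps)
    have "\<bar>F u - u / w * F w\<bar> \<le> F w"
      by (rule additive_mono_bracket[where L = L, OF add mono F0 w(1) u(1) w(2)])
    then have "\<bar>F u - u * (F a / a)\<bar> \<le> F w" by (simp only: scaled)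
    then show ?thesis by (simp only: Fw)
  qed
  then have "\<bar>F u - u * (F a / a)\<bar> \<le> 0"
    by (intro LIMSEQ_le_const[OF lim_const_over_n]) blast
  then show ?thesis by simp
qed

lemma power_law_of_euler_equation:
  fixes c c' :: "real \<Rightarrow> real"
  assumes deriv: "\<And>x. 0 < x \<Longrightarrow> (c has_real_derivative c' x) (at x)"
    and euler: "\<And>x. 0 < x \<Longrightarrow> x * c' x = \<beta> * (c x - c0)"
    and "0 < x"
  shows "c x = c0 + (c 1 - c0) * x powr \<beta>"
proof -
  define h where "h y = (c y - c0) * y powr (- \<beta>)" for y
  have "(h has_real_derivative 0) (at y within {0<..})" if "0 < y" for y
  proof -
    have "(h has_real_derivative c' y * y powr (- \<beta>) + (c y - c0) * (- \<beta> * y powr (- \<beta> - 1))) (at y)"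
      unfolding h_def using that
      by (auto intro!: derivative_eq_intros deriv has_real_derivative_powr)
    moreover have "c' y * y powr (- \<beta>) + (c y - c0) * (- \<beta> * y powr (- \<beta> - 1))
        = y powr (- \<beta>) / y * (y * c' y - \<beta> * (c y - c0))"
      using that by (simp add: powr_diff field_simps)
    ultimately show ?thesis using euler[OF that] by (simp add: has_field_derivative_at_within)
  qed
  then obtain k where "\<forall>y\<in>{0<..}. h y = k"
    using has_field_derivative_zero_constant[of "{0<..}" h] by auto
  then have "h x = h 1" using \<open>0 < x\<close> by simp
  then have "(c x - c0) / x powr \<beta> = c 1 - c0"
    unfolding h_def by (simp add: powr_minus divide_inverse)
  then show ?thesis using \<open>0 < x\<close> by (simp add: field_simps)
qed

locale semi_convex_cost =
  fixes c c' :: "real \<Rightarrow> real"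
  assumes has_derivative_c: "\<And>x. 0 \<le> x \<Longrightarrow> (c has_real_derivative c' x) (at x within {0..})"
    and semi_convex: "strictly_semi_convex c"
    and strict_mono_c: "strict_mono_on {0..} c"
begin

definition marginal_cost :: "real \<Rightarrow> real" where
  "marginal_cost x = c x + x * c' x"

lemma c_less: "0 \<le> x \<Longrightarrow> x < y \<Longrightarrow> c x < c y"
  using strict_mono_c unfolding strict_mono_on_def by simp

lemma c_le_imp_le: "0 \<le> x \<Longrightarrow> 0 \<le> y \<Longrightarrow> c x \<le> c y \<Longrightarrow> x \<le> y"
  using c_less by (meson not_le)

lemma has_derivative_c_at: "0 < x \<Longrightarrow> (c has_real_derivative c' x) (at x)"
  using has_derivative_c[of x] at_within_interior[of x "{0..}"] by simp

lemma continuous_on_c: "continuous_on {0..} c"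
  unfolding continuous_on_eq_continuous_within using has_derivative_c DERIV_continuous by blast

lemma cost_level_attained:
  assumes "0 \<le> X" "0 \<le> u" "u \<le> c X - c 0"
  obtains x where "0 \<le> x" "x \<le> X" "u = c x - c 0"
  using IVT'[of c 0 "c 0 + u" X] continuous_on_subset[OF continuous_on_c, of "{0..X}"] assms
  by force

lemma total_cost_has_derivative_within:
  "0 \<le> x \<Longrightarrow> ((\<lambda>x. x * c x) has_real_derivative marginal_cost x) (at x within {0..})"
  unfolding marginal_cost_def
  by (auto intro!: derivative_eq_intros has_derivative_c simp: algebra_simps)

lemma total_cost_has_derivative:
  "0 < x \<Longrightarrow> ((\<lambda>x. x * c x) has_real_derivative marginal_cost x) (at x)"
  unfolding marginal_cost_def
  by (auto intro!: derivative_eq_intros has_derivative_c_at simp: algebra_simps)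

lemma shifted_total_cost_has_derivative:
  "0 < x \<Longrightarrow> ((\<lambda>x. x * (c x + t)) has_real_derivative marginal_cost x + t) (at x)"
  unfolding marginal_cost_def
  by (auto intro!: derivative_eq_intros has_derivative_c_at simp: algebra_simps)

lemma marginal_cost_0: "marginal_cost 0 = c 0"
  by (simp add: marginal_cost_def)

lemma marginal_cost_strict_mono:
  assumes "0 < x" "x < y"
  shows "marginal_cost x < marginal_cost y"
proof (rule strict_convex_on_real_deriv_less)
  show "strict_convex_on_real {0..} (\<lambda>x. x * c x)"
    using semi_convex unfolding strictly_semi_convex_def .
  show "((\<lambda>x. x * c x) has_real_derivative marginal_cost x) (at x)"
    "((\<lambda>x. x * c x) has_real_derivative marginal_cost y) (at y)"
    using assms by (simp_all add: total_cost_has_derivative)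
qed (use assms in auto)

lemma marginal_cost_gt_c0:
  assumes "0 < x"
  shows "c 0 < marginal_cost x"
proof -
  have "convex_on {0..} (\<lambda>x. x * c x)"
    using semi_convex unfolding strictly_semi_convex_def
    by (rule strict_convex_on_real_imp_convex_on) simp
  then have "0 * c 0 - x * c x \<ge> marginal_cost x * (0 - x)"
    using assms total_cost_has_derivative_within[of x]
    by (intro convex_on_imp_above_tangent) (auto simp: connected_iff_interval)
  then have "c x \<le> marginal_cost x" using assms by (simp add: mult_le_cancel_left_pos)
  then show ?thesis using c_less[of 0 x] assms by simp
qed

lemma marginal_cost_mono: "0 \<le> x \<Longrightarrow> x \<le> y \<Longrightarrow> marginal_cost x \<le> marginal_cost y"
  using marginal_cost_strict_mono[of x y] marginal_cost_gt_c0[of y] marginal_cost_0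
  by (cases "x = 0"; cases "x = y") auto

lemma DIOT_equal_costs_imp_marginal_costs:
  assumes diot: "is_DIOT2 c (\<lambda>x. c x + t) \<tau>1 \<tau>2"
    and "0 < x1" "0 < x2" and "c x1 = c x2 + (t + \<tau>2 - \<tau>1)"
  shows "marginal_cost x1 = marginal_cost x2 + t"
proof -
  have "wardrop2 (\<lambda>x. c x + \<tau>1) (\<lambda>x. c x + t + \<tau>2) (x1 + x2) x1 x2"
    using assms unfolding wardrop2_def feasible2_def by auto
  then have "sysopt2 c (\<lambda>x. c x + t) (x1 + x2) x1 x2"
    using diot assms unfolding is_DIOT2_def by auto
  then show ?thesis
    using assms total_cost_has_derivative shifted_total_cost_has_derivative
    by (blast intro: sysopt2_interior_marginal_costs_eq)
qed

text \<open>A demand slightly above \<open>y\<close> would otherwise be routed entirely on the first edge at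
  equilibrium, contradicting the boundary optimality condition.\<close>
lemma DIOT_toll_gap_le:
  assumes diot: "is_DIOT2 c (\<lambda>x. c x + t) \<tau>1 \<tau>2"
    and y: "0 < y" and t: "t = marginal_cost y - c 0"
  shows "t + \<tau>2 - \<tau>1 \<le> c y - c 0"
proof (rule ccontr)
  assume "\<not> ?thesis"
  moreover have "(c \<longlongrightarrow> c y) (at_right y)"
    using DERIV_isCont[OF has_derivative_c_at[OF y]] unfolding isCont_def
    by (rule tendsto_mono[OF at_le, rotated]) simp
  ultimately have "eventually (\<lambda>x. c x < c 0 + (t + \<tau>2 - \<tau>1)) (at_right y)"
    by (intro order_tendstoD(2)) auto
  then obtain b where "y < b" and b: "\<And>x. y < x \<Longrightarrow> x < b \<Longrightarrow> c x < c 0 + (t + \<tau>2 - \<tau>1)"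
    unfolding eventually_at_right_field by blast
  define \<mu> where "\<mu> = (y + b) / 2"
  have "y < \<mu>" "c \<mu> < c 0 + (t + \<tau>2 - \<tau>1)"
    using \<open>y < b\<close> b unfolding \<mu>_def by auto
  then have "wardrop2 (\<lambda>x. c x + \<tau>1) (\<lambda>x. c x + t + \<tau>2) \<mu> \<mu> 0"
    using y unfolding wardrop2_def feasible2_def by auto
  then have "sysopt2 c (\<lambda>x. c x + t) \<mu> \<mu> 0"
    using diot y \<open>y < \<mu>\<close> unfolding is_DIOT2_def by auto
  moreover have "((\<lambda>x. x * (c x + t)) has_real_derivative c 0 + t) (at 0 within {0..})"
    using has_derivative_c[of 0] by (auto intro!: derivative_eq_intros)
  ultimately have "marginal_cost \<mu> \<le> c 0 + t"
    using y \<open>y < \<mu>\<close> total_cost_has_derivative[of \<mu>]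
    by (intro sysopt2_boundary_marginal_cost_le) auto
  then show False using marginal_cost_strict_mono[OF y \<open>y < \<mu>\<close>] t by simp
qed

lemma DIOT_toll_gap_ge:
  assumes diot: "is_DIOT2 c (\<lambda>x. c x + t) \<tau>1 \<tau>2"
    and y: "0 < y" and t: "t = marginal_cost y - c 0"
  shows "c y - c 0 \<le> t + \<tau>2 - \<tau>1"
proof (rule ccontr)
  assume gap: "\<not> ?thesis"
  define \<delta> where "\<delta> = t + \<tau>2 - \<tau>1"
  have "0 < t" using marginal_cost_gt_c0[OF y] t by simp
  show False
  proof (cases "c y + \<delta> \<le> c 0")
    case True
    then have "wardrop2 (\<lambda>x. c x + \<tau>1) (\<lambda>x. c x + t + \<tau>2) y 0 y"
      using y unfolding wardrop2_def feasible2_def \<delta>_def by auto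
    then have "sysopt2 c (\<lambda>x. c x + t) y 0 y"
      using diot y unfolding is_DIOT2_def by auto
    then have "total_cost2 c (\<lambda>x. c x + t) 0 y \<le> total_cost2 c (\<lambda>x. c x + t) y 0"
      using y unfolding sysopt2_def feasible2_def by auto
    then have "t * y \<le> 0" unfolding total_cost2_def by (simp add: algebra_simps)
    then show False using y \<open>0 < t\<close> by (simp add: mult_le_0_iff)
  next
    case False
    define g where "g s = c s - c (y - s) - \<delta>" for s
    have "continuous_on {0..y} g"
      unfolding g_def using y
      by (intro continuous_intros continuous_on_subset[OF continuous_on_c]
          continuous_on_compose2[OF continuous_on_c]) auto
    moreover have "g 0 \<le> 0" "0 \<le> g y" using False gap unfolding g_def \<delta>_def by auto
    ultimately obtain s where s: "0 \<le> s" "s \<le> y" "g s = 0"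
      using IVT'[of g 0 0 y] y by auto
    then have "s \<noteq> 0" "s \<noteq> y" using False gap unfolding g_def \<delta>_def by auto
    then have "0 < s" "0 < y - s" using s by auto
    moreover have "c s = c (y - s) + \<delta>" using s unfolding g_def by simp
    ultimately have "marginal_cost s = marginal_cost (y - s) + t"
      unfolding \<delta>_def by (intro DIOT_equal_costs_imp_marginal_costs[OF diot])
    moreover have "c 0 < marginal_cost (y - s)" using \<open>0 < y - s\<close> by (rule marginal_cost_gt_c0)
    moreover have "marginal_cost s < marginal_cost y"
      using \<open>0 < s\<close> \<open>s \<noteq> y\<close> s by (intro marginal_cost_strict_mono) auto
    ultimately show False using t by simp
  qed
qed

lemma marginal_cost_additive_if_DIOTs:
  assumes diots: "\<And>t. 0 \<le> t \<Longrightarrow> \<exists>\<tau>1 \<tau>2. is_DIOT2 c (\<lambda>x. c x + t) \<tau>1 \<tau>2"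
    and "0 < x1" "0 < x2" "0 < y" and "c x1 - c 0 = (c x2 - c 0) + (c y - c 0)"
  shows "marginal_cost x1 - c 0 = (marginal_cost x2 - c 0) + (marginal_cost y - c 0)"
proof -
  define t where "t = marginal_cost y - c 0"
  have "0 \<le> t" using marginal_cost_gt_c0[OF \<open>0 < y\<close>] unfolding t_def by simp
  then obtain \<tau>1 \<tau>2 where diot: "is_DIOT2 c (\<lambda>x. c x + t) \<tau>1 \<tau>2" using diots by blast
  have "t + \<tau>2 - \<tau>1 = c y - c 0"
    using DIOT_toll_gap_le[OF diot \<open>0 < y\<close> t_def] DIOT_toll_gap_ge[OF diot \<open>0 < y\<close> t_def] by linarith
  then have "marginal_cost x1 = marginal_cost x2 + t"
    using assms by (intro DIOT_equal_costs_imp_marginal_costs[OF diot]) auto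
  then show ?thesis unfolding t_def by simp
qed

text \<open>Only levels \<open>u\<close> in the range of \<open>\<lambda>x. c x - c 0\<close> on \<open>{0..}\<close> are meaningful;
  elsewhere \<open>the_inv_into\<close> returns an arbitrary value.\<close>
definition marginal_cost_at_level :: "real \<Rightarrow> real" where
  "marginal_cost_at_level u = marginal_cost (the_inv_into {0..} c (c 0 + u)) - c 0"

lemma marginal_cost_at_level_cost:
  "0 \<le> x \<Longrightarrow> marginal_cost_at_level (c x - c 0) = marginal_cost x - c 0"
  using the_inv_into_f_f[OF strict_mono_on_imp_inj_on[OF strict_mono_c], of x]
  unfolding marginal_cost_at_level_def by simp

lemma marginal_cost_at_level_mono:
  assumes "0 \<le> X" "0 \<le> u" "u \<le> v" "v \<le> c X - c 0"
  shows "marginal_cost_at_level u \<le> marginal_cost_at_level v"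
proof -
  obtain xu where xu: "0 \<le> xu" "u = c xu - c 0"
    using cost_level_attained[of X u] assms by auto
  obtain xv where xv: "0 \<le> xv" "v = c xv - c 0"
    using cost_level_attained[of X v] assms by auto
  have "c xu \<le> c xv" using xu(2) xv(2) \<open>u \<le> v\<close> by linarith
  then have "xu \<le> xv" by (rule c_le_imp_le[OF xu(1) xv(1)])
  then have "marginal_cost xu \<le> marginal_cost xv" by (rule marginal_cost_mono[OF xu(1)])
  then show ?thesis
    unfolding xu(2) xv(2) marginal_cost_at_level_cost[OF xu(1)] marginal_cost_at_level_cost[OF xv(1)]
    by simp
qed

lemma marginal_cost_at_level_additive_if_DIOTs:
  assumes diots: "\<And>t. 0 \<le> t \<Longrightarrow> \<exists>\<tau>1 \<tau>2. is_DIOT2 c (\<lambda>x. c x + t) \<tau>1 \<tau>2"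
    and "0 \<le> X" "0 < u" "0 < v" "u + v \<le> c X - c 0"
  shows "marginal_cost_at_level (u + v) = marginal_cost_at_level u + marginal_cost_at_level v"
proof -
  have level: "\<exists>x>0. marginal_cost_at_level w = marginal_cost x - c 0 \<and> w = c x - c 0"
    if w: "0 < w" "w \<le> c X - c 0" for w
  proof -
    obtain x where "0 \<le> x" "w = c x - c 0"
      using cost_level_attained[OF \<open>0 \<le> X\<close> less_imp_le[OF w(1)] w(2)] by blast
    moreover from calculation have "x \<noteq> 0" using \<open>0 < w\<close> by auto
    ultimately show ?thesis by (intro exI[of _ x]) (auto simp: marginal_cost_at_level_cost)
  qed
  obtain x1 where x1: "0 < x1" "marginal_cost_at_level (u + v) = marginal_cost x1 - c 0" "u + v = c x1 - c 0"
    using level[of "u + v"] assms by auto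
  obtain x2 where x2: "0 < x2" "marginal_cost_at_level u = marginal_cost x2 - c 0" "u = c x2 - c 0"
    using level[of u] assms by auto
  obtain y where y: "0 < y" "marginal_cost_at_level v = marginal_cost y - c 0" "v = c y - c 0"
    using level[of v] assms by auto
  have "c x1 - c 0 = (c x2 - c 0) + (c y - c 0)" using x1(3) x2(3) y(3) by linarith
  then have "marginal_cost x1 - c 0 = (marginal_cost x2 - c 0) + (marginal_cost y - c 0)"
    using marginal_cost_additive_if_DIOTs[OF diots x1(1) x2(1) y(1)] by simp
  then show ?thesis by (simp only: x1(2) x2(2) y(2))
qed

lemma marginal_cost_affine_if_DIOTs:
  assumes diots: "\<And>t. 0 \<le> t \<Longrightarrow> \<exists>\<tau>1 \<tau>2. is_DIOT2 c (\<lambda>x. c x + t) \<tau>1 \<tau>2"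
  obtains k where "\<And>x. 0 \<le> x \<Longrightarrow> marginal_cost x - c 0 = k * (c x - c 0)"
proof
  define a where "a = c 1 - c 0"
  fix x :: real assume "0 \<le> x"
  define L where "L = c (x + 2) - c 0"
  have "marginal_cost_at_level (c x - c 0) = (c x - c 0) * (marginal_cost_at_level a / a)"
  proof (rule additive_mono_imp_linear[where L = L])
    show "marginal_cost_at_level (u + v) = marginal_cost_at_level u + marginal_cost_at_level v"
      if "0 < u" "0 < v" "u + v < L" for u v
      using that \<open>0 \<le> x\<close> unfolding L_def
      by (intro marginal_cost_at_level_additive_if_DIOTs[OF diots, where X = "x + 2"]) auto
    show "marginal_cost_at_level u \<le> marginal_cost_at_level v" if "0 \<le> u" "u \<le> v" "v < L" for u v
      using that \<open>0 \<le> x\<close> unfolding L_def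
      by (intro marginal_cost_at_level_mono[where X = "x + 2"]) auto
    show "marginal_cost_at_level 0 = 0"
      using marginal_cost_at_level_cost[of 0] by (simp add: marginal_cost_0)
    show "0 < a" "a < L"
      unfolding a_def L_def using c_less[of 0 1] c_less[of 1 "x + 2"] \<open>0 \<le> x\<close> by simp_all
    show "0 \<le> c x - c 0" using c_less[of 0 x] \<open>0 \<le> x\<close> by (cases "x = 0") auto
    show "c x - c 0 < L" unfolding L_def using c_less[of x "x + 2"] \<open>0 \<le> x\<close> by simp
  qed
  then show "marginal_cost x - c 0 = marginal_cost_at_level a / a * (c x - c 0)"
    using \<open>0 \<le> x\<close> by (simp add: marginal_cost_at_level_cost mult.commute)
qed

lemma BPR_type_if_marginal_cost_affine:
  assumes "0 \<le> c 0" and affine: "\<And>x. 0 \<le> x \<Longrightarrow> marginal_cost x - c 0 = k * (c x - c 0)"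
  shows "BPR_type c"
proof -
  have euler: "x * c' x = (k - 1) * (c x - c 0)" if "0 < x" for x
    using affine[of x] that by (simp add: marginal_cost_def algebra_simps)
  have power: "c x = c 0 + (c 1 - c 0) * x powr (k - 1)" if "0 < x" for x
    using power_law_of_euler_equation[OF has_derivative_c_at euler that] .
  have "0 < k - 1"
  proof (rule ccontr)
    assume "\<not> 0 < k - 1"
    then have "(2::real) powr (k - 1) \<le> 1" using powr_mono[of "k - 1" 0 2] by simp
    then have "(c 1 - c 0) * 2 powr (k - 1) \<le> c 1 - c 0"
      using c_less[of 0 1] by (simp add: mult_left_le)
    then have "c 2 \<le> c 1" using power[of 2] by simp
    then show False using c_less[of 1 2] by simp
  qed
  moreover have "c x = c 0 + (c 1 - c 0) * x powr (k - 1)" if "0 \<le> x" for x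
    using power[of x] that by (cases "x = 0") auto
  moreover have "0 \<le> c 1 - c 0" using c_less[of 0 1] by simp
  ultimately show ?thesis
    unfolding BPR_type_def using \<open>0 \<le> c 0\<close> by blast
qed

end

theorem theorem5:
  fixes c :: "real \<Rightarrow> real"
  assumes "\<forall>x\<ge>0. c x \<ge> 0"
    and "twice_cont_diff_nonneg c"
    and "strictly_semi_convex c"
    and "strict_mono_on {0..} c"
    and "\<not> BPR_type c"
  shows "\<exists>t\<ge>0. \<not> (\<exists>\<tau>1 \<tau>2. is_DIOT2 c (\<lambda>x. c x + t) \<tau>1 \<tau>2)"
proof (rule ccontr)
  assume "\<not> ?thesis"
  then have diots: "\<And>t. 0 \<le> t \<Longrightarrow> \<exists>\<tau>1 \<tau>2. is_DIOT2 c (\<lambda>x. c x + t) \<tau>1 \<tau>2" by blast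
  obtain c' where "\<forall>x\<ge>0. (c has_real_derivative c' x) (at x within {0..})"
    using assms(2) unfolding twice_cont_diff_nonneg_def by blast
  then interpret semi_convex_cost c c'
    using assms(3,4) by unfold_locales auto
  obtain k where "\<And>x. 0 \<le> x \<Longrightarrow> marginal_cost x - c 0 = k * (c x - c 0)"
    using marginal_cost_affine_if_DIOTs[OF diots] by blast
  then have "BPR_type c"
    using assms(1) by (intro BPR_type_if_marginal_cost_affine) auto
  with assms(5) show False by contradiction
qed

end
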